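(* Let $I$ be a finite or infinite non-empty index set and let $\mathbb{K}$ be a positive commutative monoid. The following are equivalent: (1) $\mathbb{K}$ has the transportation property; (2) $\mathbb{K}^I$ has the transportation property; (3) $\mathbb{K}^I_{\mathrm{fin}}$ has the transportation property.
   Context: Positive: $p+q=0\Rightarrow p=q=0$. $\mathbb{K}^I$ is the monoid of all maps $f:I\to K$ with pointwise addition $(f+g)(i)=f(i)+g(i)$ and the constant-$0$ map as neutral element; $\mathbb{K}^I_{\mathrm{fin}}$ is its submonoid of maps $f$ with $f(i)\ne0$ for only finitely many $i$. A monoid $(M,+,0)$ has the transportation property if for all positive integers $m,n$ and all $b\in M^m$, $c\in M^n$ with $b_1+\dots+b_m=c_1+\dots+c_n$ there is $(d_{ij})\in M^{m\times n}$ with $\sum_j d_{ij}=b_i$ for all $i$ and $\sum_i d_{ij}=c_j$ for all $j$. *)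

theory Defs
  imports Main "HOL-Library.Function_Algebras"
begin

definition positive_monoid :: "'a::comm_monoid_add itself \<Rightarrow> bool" where
  "positive_monoid _ \<longleftrightarrow> (\<forall>p q :: 'a. p + q = 0 \<longrightarrow> p = 0 \<and> q = 0)"

text \<open>Indices run over
  0..<m and 0..<n instead of 1..m and 1..n.\<close>
definition transportation_property :: "'a::comm_monoid_add set \<Rightarrow> bool" where
  "transportation_property M \<longleftrightarrow>
     (\<forall>(m::nat) (n::nat) (b::nat \<Rightarrow> 'a) (c::nat \<Rightarrow> 'a).
        0 < m \<and> 0 < n \<and> (\<forall>i<m. b i \<in> M) \<and> (\<forall>j<n. c j \<in> M) \<and>
        (\<Sum>i<m. b i) = (\<Sum>j<n. c j) \<longrightarrow>
        (\<exists>d :: nat \<Rightarrow> nat \<Rightarrow> 'a.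
           (\<forall>i<m. \<forall>j<n. d i j \<in> M) \<and>
           (\<forall>i<m. (\<Sum>j<n. d i j) = b i) \<and>
           (\<forall>j<n. (\<Sum>i<m. d i j) = c j)))"

definition fin_support :: "('i \<Rightarrow> 'k::zero) set" where
  "fin_support = {f. finite {i. f i \<noteq> 0}}"

end

theory Submission
  imports Defs
begin

text \<open>A transportation problem in \<open>K\<^sup>I\<close> splits into one problem in \<open>K\<close> per coordinate;
  solving these independently (by choice) solves the problem in \<open>K\<^sup>I\<close>. In a positive monoid
  an entry of a plan vanishes wherever its row total vanishes, so finitely supported data
  yield a finitely supported plan. Conversely \<open>K\<close> is a retract of both \<open>K\<^sup>I\<close> and
  \<open>K\<^sup>I\<^sub>f\<^sub>i\<^sub>n\<close> (insertion at one coordinate, evaluation at it), and the transportation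
  property passes to retracts.\<close>

lemma sum_fun_apply: "(\<Sum>i\<in>A. f i) x = (\<Sum>i\<in>A. (f i x :: 'k::comm_monoid_add))"
  by (induction A rule: infinite_finite_induct) simp_all

lemma positive_monoid_sum_eq_0D:
  assumes "positive_monoid TYPE('k::comm_monoid_add)" "finite A"
    and "(\<Sum>i\<in>A. (f i :: 'k)) = 0" "j \<in> A"
  shows "f j = 0"
  using assms(2-4)
proof (induction A rule: finite_induct)
  case (insert a F)
  then have "f a + sum f F = 0" by simp
  then have "f a = 0 \<and> sum f F = 0"
    using assms(1) unfolding positive_monoid_def by blast
  with insert show ?case by auto
qed simp

lemma transportation_plan_pointwise:
  fixes b c :: "nat \<Rightarrow> 'i \<Rightarrow> 'k::comm_monoid_add"
  assumes tp: "transportation_property (UNIV :: 'k set)"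
    and "0 < m" "0 < n" and balanced: "(\<Sum>i<m. b i) = (\<Sum>j<n. c j)"
  obtains d where "\<forall>i<m. (\<Sum>j<n. d i j) = b i" and "\<forall>j<n. (\<Sum>i<m. d i j) = c j"
proof -
  have "\<exists>e :: nat \<Rightarrow> nat \<Rightarrow> 'k. (\<forall>i<m. (\<Sum>j<n. e i j) = b i x) \<and> (\<forall>j<n. (\<Sum>i<m. e i j) = c j x)"
    for x
  proof -
    have "(\<Sum>i<m. b i x) = (\<Sum>j<n. c j x)"
      using fun_cong[OF balanced, of x] by (simp add: sum_fun_apply)
    then show ?thesis
      using tp[unfolded transportation_property_def, rule_format, of m n "\<lambda>i. b i x" "\<lambda>j. c j x"]
        \<open>0 < m\<close> \<open>0 < n\<close> by simp
  qed
  then obtain e where e: "\<And>x. (\<forall>i<m. (\<Sum>j<n. e x i j) = b i x) \<and> (\<forall>j<n. (\<Sum>i<m. e x i j) = c j x)"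
    using choice[of "\<lambda>x e. (\<forall>i<m. (\<Sum>j<n. e i j) = b i x) \<and> (\<forall>j<n. (\<Sum>i<m. e i j) = c j x)"]
    by blast
  show thesis
    by (rule that[of "\<lambda>i j x. e x i j"]) (simp_all add: fun_eq_iff sum_fun_apply e)
qed

lemma transportation_property_fun:
  assumes "transportation_property (UNIV :: 'k::comm_monoid_add set)"
  shows "transportation_property (UNIV :: ('i \<Rightarrow> 'k) set)"
  unfolding transportation_property_def
proof (intro allI impI, elim conjE)
  fix m n and b c :: "nat \<Rightarrow> 'i \<Rightarrow> 'k"
  assume "0 < m" "0 < n" "(\<Sum>i<m. b i) = (\<Sum>j<n. c j)"
  then obtain d where "\<forall>i<m. (\<Sum>j<n. d i j) = b i" "\<forall>j<n. (\<Sum>i<m. d i j) = c j"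
    by (rule transportation_plan_pointwise[OF assms])
  then show "\<exists>d. (\<forall>i<m. \<forall>j<n. d i j \<in> UNIV) \<and> (\<forall>i<m. (\<Sum>j<n. d i j) = b i) \<and>
      (\<forall>j<n. (\<Sum>i<m. d i j) = c j)"
    by blast
qed

lemma transportation_property_fin_support:
  assumes pos: "positive_monoid TYPE('k::comm_monoid_add)"
    and tp: "transportation_property (UNIV :: 'k set)"
  shows "transportation_property (fin_support :: ('i \<Rightarrow> 'k) set)"
  unfolding transportation_property_def
proof (intro allI impI, elim conjE)
  fix m n and b c :: "nat \<Rightarrow> 'i \<Rightarrow> 'k"
  assume "0 < m" "0 < n" and b_fin: "\<forall>i<m. b i \<in> fin_support"
    and balanced: "(\<Sum>i<m. b i) = (\<Sum>j<n. c j)"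
  obtain d where rows: "\<forall>i<m. (\<Sum>j<n. d i j) = b i" and cols: "\<forall>j<n. (\<Sum>i<m. d i j) = c j"
    using tp \<open>0 < m\<close> \<open>0 < n\<close> balanced by (rule transportation_plan_pointwise)
  have "d i j \<in> fin_support" if "i < m" "j < n" for i j
  proof -
    have "d i j x = 0" if "b i x = 0" for x
    proof (rule positive_monoid_sum_eq_0D[OF pos, of "{..<n}" "\<lambda>j. d i j x" j])
      show "(\<Sum>j<n. d i j x) = 0"
        using rows \<open>i < m\<close> \<open>b i x = 0\<close> by (simp add: sum_fun_apply[symmetric])
    qed (use \<open>j < n\<close> in simp_all)
    then have "{x. d i j x \<noteq> 0} \<subseteq> {x. b i x \<noteq> 0}" by blast
    then show ?thesis
      using b_fin \<open>i < m\<close> unfolding fin_support_def by (auto intro: finite_subset)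
  qed
  with rows cols show "\<exists>d. (\<forall>i<m. \<forall>j<n. d i j \<in> fin_support) \<and>
      (\<forall>i<m. (\<Sum>j<n. d i j) = b i) \<and> (\<forall>j<n. (\<Sum>i<m. d i j) = c j)"
    by blast
qed

lemma transportation_property_retract:
  fixes s :: "'a::comm_monoid_add \<Rightarrow> 'b::comm_monoid_add" and r :: "'b \<Rightarrow> 'a"
  assumes tp: "transportation_property M"
    and s_in: "\<And>a. s a \<in> M" and "s 0 = 0" and "\<And>a a'. s (a + a') = s a + s a'"
    and "r 0 = 0" and "\<And>x y. r (x + y) = r x + r y"
    and r_s: "\<And>a. r (s a) = a"
  shows "transportation_property (UNIV :: 'a set)"
  unfolding transportation_property_def
proof (intro allI impI, elim conjE)
  fix m n and b c :: "nat \<Rightarrow> 'a"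
  have s_sum: "(\<Sum>i\<in>A. s (f i)) = s (\<Sum>i\<in>A. f i)" for f and A :: "nat set"
    using sum_comp_morphism[of s f A] assms(3,4) by (simp add: comp_def)
  have r_sum: "(\<Sum>i\<in>A. r (f i)) = r (\<Sum>i\<in>A. f i)" for f and A :: "nat set"
    using sum_comp_morphism[of r f A] assms(5,6) by (simp add: comp_def)
  assume "0 < m" "0 < n" "(\<Sum>i<m. b i) = (\<Sum>j<n. c j)"
  then have "(\<Sum>i<m. s (b i)) = (\<Sum>j<n. s (c j))"
    by (simp add: s_sum)
  then obtain D where rows: "\<forall>i<m. (\<Sum>j<n. D i j) = s (b i)" and cols: "\<forall>j<n. (\<Sum>i<m. D i j) = s (c j)"
    using tp[unfolded transportation_property_def, rule_format, of m n "s \<circ> b" "s \<circ> c"]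
      s_in \<open>0 < m\<close> \<open>0 < n\<close> by auto
  have "\<forall>i<m. (\<Sum>j<n. r (D i j)) = b i" "\<forall>j<n. (\<Sum>i<m. r (D i j)) = c j"
    using rows cols by (simp_all add: r_sum r_s)
  then show "\<exists>d. (\<forall>i<m. \<forall>j<n. d i j \<in> UNIV) \<and> (\<forall>i<m. (\<Sum>j<n. d i j) = b i) \<and>
      (\<forall>j<n. (\<Sum>i<m. d i j) = c j)"
    by (intro exI[of _ "\<lambda>i j. r (D i j)"]) simp
qed

lemma transportation_property_from_fun:
  assumes "transportation_property M"
    and "\<And>a::'k::comm_monoid_add. 0(x0 := a) \<in> M"
  shows "transportation_property (UNIV :: 'k set)"
  by (rule transportation_property_retract[OF assms(1), where s = "\<lambda>a. 0(x0 := a)" and r = "\<lambda>f. f x0"])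
    (simp_all add: assms fun_eq_iff)

lemma fun_upd_zero_in_fin_support: "(0 :: 'i \<Rightarrow> 'k::zero)(x0 := a) \<in> fin_support"
proof -
  have "{x. ((0 :: 'i \<Rightarrow> 'k)(x0 := a)) x \<noteq> 0} \<subseteq> {x0}" by auto
  then show ?thesis unfolding fin_support_def by (auto intro: finite_subset)
qed

theorem proposition30:
  assumes "positive_monoid TYPE('k::comm_monoid_add)"
  shows "(transportation_property (UNIV :: 'k set)
            \<longleftrightarrow> transportation_property (UNIV :: ('i \<Rightarrow> 'k) set))
       \<and> (transportation_property (UNIV :: 'k set)
            \<longleftrightarrow> transportation_property (fin_support :: ('i \<Rightarrow> 'k) set))"
  \<comment> \<open>\<open>I\<close> is a HOL type, hence inhabited: this is where non-emptiness of \<open>I\<close> enters.\<close>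
  using transportation_property_fun transportation_property_fin_support[OF assms]
    transportation_property_from_fun[OF _ UNIV_I]
    transportation_property_from_fun[OF _ fun_upd_zero_in_fin_support]
  by blast

end
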